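(* The basin $\mathcal W^s(\mathcal B)$ contains the low temperature cylinder $\{(\phi,t)\in\mathcal C:\ t\le t_c\}\setminus\{\beta_c,\beta_c'\}$, where $\beta_c=(0,t_c)$ and $\beta_c'=(\pi,t_c)$.
   Context: $\mathcal C=(\mathbb R/2\pi\mathbb Z)\times[0,1]$ with coordinates $(\phi,t)$, $z=e^{i\phi}$, and $\mathcal R(z,t)=\big(\frac{z^2+t^2}{z^{-2}+t^2},\frac{z^2+z^{-2}+2}{z^2+z^{-2}+t^2+t^{-2}}\big)$, which maps $\mathcal C$ to itself (undefined only at $(\pm\pi/2,1)$). $\mathcal B=\{t=0\}$ is the bottom circle and $\mathcal W^s(\mathcal B)$ is the set of $x\in\mathcal C$ whose orbit is defined and converges to $\mathcal B$. $t_c\approx0.2956$ is the unique solution in $(0,1)$ of $(1+t^2)^2=4t$ (the repelling fixed point of $\mathcal R$ on $\{\phi=0\}$). *)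

theory Defs
  imports "HOL-Analysis.Analysis"
begin

text \<open>Points of the cylinder are encoded as pairs (z, t) with z = cis phi on the unit circle.\<close>

definition cyl :: "(complex \<times> real) set" where
  "cyl = {(z, t). cmod z = 1 \<and> 0 \<le> t \<and> t \<le> 1}"

text \<open>Indeterminacy points (+-pi/2, 1), i.e. z^2 = -1 and t = 1.\<close>
definition indet :: "(complex \<times> real) set" where
  "indet = {(z, t). t = 1 \<and> z\<^sup>2 = -1}"

text \<open>The second component is written with t^{-2} cleared
  (numerator and denominator multiplied by t^2), which is the continuous extension
  to the bottom circle t = 0; on |z| = 1 the quantity z^2 + z^{-2} is real.\<close>
definition Rmap :: "complex \<times> real \<Rightarrow> complex \<times> real" where
  "Rmap = (\<lambda>(z, t).
     ((z\<^sup>2 + complex_of_real (t\<^sup>2)) / (inverse (z\<^sup>2) + complex_of_real (t\<^sup>2)),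
      t\<^sup>2 * Re (z\<^sup>2 + inverse (z\<^sup>2) + 2)
        / (t\<^sup>2 * Re (z\<^sup>2 + inverse (z\<^sup>2)) + t ^ 4 + 1)))"

text \<open>Stable set of the bottom circle: orbit is defined (never hits indet) and
  the distance to B, i.e. the t-coordinate, tends to 0.\<close>
definition Ws_B :: "(complex \<times> real) set" where
  "Ws_B = {x \<in> cyl. (\<forall>n. (Rmap ^^ n) x \<notin> indet) \<and>
                     (\<lambda>n. snd ((Rmap ^^ n) x)) \<longlonglongrightarrow> 0}"

definition tc :: real where
  "tc = (THE t. 0 < t \<and> t < 1 \<and> (1 + t\<^sup>2)\<^sup>2 = 4 * t)"

end

theory Submission imports Defs begin

(* On the unit circle, with a = Re (z^2), the height map of Rmap is
   t^2 (2a + 2) / (2a t^2 + t^4 + 1). It is increasing in a, so it is dominated by its value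
   t * r(t) on the invariant line z = +-1, where r(t) = 4t / (1 + t^2)^2, strictly off that line.
   The rate r is increasing on [0, 1/3] and equals 1 exactly at tc, so below tc the heights
   decay at least geometrically with ratio r(t) < 1. A point at height tc off the line
   z = +-1 drops strictly below tc after one step. *)

definition decay_rate :: "real \<Rightarrow> real" where
  "decay_rate t = 4 * t / (1 + t\<^sup>2)\<^sup>2"

lemma height_formula_bounds:
  fixes t a :: real
  assumes "0 \<le> t" "t < 1" "-1 \<le> a" "a \<le> 1"
  shows "0 \<le> t\<^sup>2 * (2*a + 2) / (2*a*t\<^sup>2 + t^4 + 1)"
    and "t\<^sup>2 * (2*a + 2) / (2*a*t\<^sup>2 + t^4 + 1) \<le> t * decay_rate t"
    and "a < 1 \<Longrightarrow> 0 < t \<Longrightarrow> t\<^sup>2 * (2*a + 2) / (2*a*t\<^sup>2 + t^4 + 1) < t * decay_rate t"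
proof -
  have "t\<^sup>2 < 1" using assms by (simp add: power_less_one_iff)
  then have sq_pos: "0 < (1 - t\<^sup>2)\<^sup>2" by simp
  have "-1 * t\<^sup>2 \<le> a * t\<^sup>2" using assms by (intro mult_right_mono) auto
  then have "(1 - t\<^sup>2)\<^sup>2 \<le> 2*a*t\<^sup>2 + t^4 + 1"
    by (simp add: power2_eq_square power4_eq_xxxx algebra_simps)
  with sq_pos have den_pos: "0 < 2*a*t\<^sup>2 + t^4 + 1" by linarith
  have "0 < 1 + t\<^sup>2" by (simp add: add_pos_nonneg)
  then have q_pos: "0 < (1 + t\<^sup>2)\<^sup>2" "1 + t\<^sup>2 \<noteq> 0" by simp_all
  have gap: "4*t\<^sup>2 * (2*a*t\<^sup>2 + t^4 + 1) - t\<^sup>2 * (2*a + 2) * (1 + t\<^sup>2)\<^sup>2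
      = 2*t\<^sup>2 * (1 - a) * (1 - t\<^sup>2)\<^sup>2"
    by (simp add: power2_eq_square power4_eq_xxxx algebra_simps)
  have rhs: "t * decay_rate t = 4*t\<^sup>2 / (1 + t\<^sup>2)\<^sup>2"
    by (simp add: decay_rate_def power2_eq_square)
  show "0 \<le> t\<^sup>2 * (2*a + 2) / (2*a*t\<^sup>2 + t^4 + 1)" using den_pos assms by auto
  have "0 \<le> 2*t\<^sup>2 * (1 - a) * (1 - t\<^sup>2)\<^sup>2" using assms by simp
  then have "t\<^sup>2 * (2*a + 2) * (1 + t\<^sup>2)\<^sup>2 \<le> 4*t\<^sup>2 * (2*a*t\<^sup>2 + t^4 + 1)" using gap by linarith
  then show "t\<^sup>2 * (2*a + 2) / (2*a*t\<^sup>2 + t^4 + 1) \<le> t * decay_rate t"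
    unfolding rhs using den_pos q_pos by (simp add: divide_simps)
  assume "a < 1" "0 < t"
  then have "0 < 2*t\<^sup>2 * (1 - a) * (1 - t\<^sup>2)\<^sup>2" using sq_pos by simp
  then have "t\<^sup>2 * (2*a + 2) * (1 + t\<^sup>2)\<^sup>2 < 4*t\<^sup>2 * (2*a*t\<^sup>2 + t^4 + 1)" using gap by linarith
  then show "t\<^sup>2 * (2*a + 2) / (2*a*t\<^sup>2 + t^4 + 1) < t * decay_rate t"
    unfolding rhs using den_pos q_pos by (simp add: divide_simps)
qed

lemma decay_rate_mono:
  fixes t u :: real
  assumes "0 \<le> t" "t \<le> u" "u \<le> 1/3"
  shows "decay_rate t \<le> decay_rate u"
proof -
  have ut: "u * t \<le> 1/9" using mult_mono [of u "1/3" t "1/3"] assms by simp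
  have "u * u \<le> 1/9" "t * t \<le> 1/9"
    using mult_mono [of u "1/3" u "1/3"] mult_mono [of t "1/3" t "1/3"] assms by simp_all
  with ut have "u\<^sup>2 + u*t + t\<^sup>2 \<le> 1/3" by (simp add: power2_eq_square)
  with ut have "u*t * (u\<^sup>2 + u*t + t\<^sup>2) \<le> 1/27"
    using mult_mono [of "u*t" "1/9" "u\<^sup>2 + u*t + t\<^sup>2" "1/3"] assms by simp
  with ut assms have "0 \<le> (u - t) * (1 - 2*u*t - u*t * (u\<^sup>2 + u*t + t\<^sup>2))" by simp
  also have "\<dots> = u * (1 + t\<^sup>2)\<^sup>2 - t * (1 + u\<^sup>2)\<^sup>2"
    by (simp add: power2_eq_square algebra_simps)
  finally have "t * (1 + u\<^sup>2)\<^sup>2 \<le> u * (1 + t\<^sup>2)\<^sup>2" by simp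
  moreover have "0 < 1 + t\<^sup>2" "0 < 1 + u\<^sup>2" by (simp_all add: add_pos_nonneg)
  ultimately show ?thesis by (simp add: decay_rate_def divide_simps)
qed

lemma tc_equation_factor:
  fixes t :: real
  shows "(1 + t\<^sup>2)\<^sup>2 - 4*t = (t - 1) * (t^3 + t\<^sup>2 + 3*t - 1)"
  by (simp add: power2_eq_square power3_eq_cube algebra_simps)

lemma tc_cubic_strict_mono:
  fixes x y :: real
  assumes "0 \<le> x" "x < y"
  shows "x^3 + x\<^sup>2 + 3*x - 1 < y^3 + y\<^sup>2 + 3*y - 1"
proof -
  have "x^3 < y^3" "x\<^sup>2 < y\<^sup>2" using assms by (simp_all add: power_strict_mono)
  with assms show ?thesis by linarith
qed

lemma tc_eq_cubic_root:
  fixes r :: real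
  assumes "0 \<le> r" "r^3 + r\<^sup>2 + 3*r - 1 = 0"
  shows "tc = r" and "0 < r" and "r < 1/3"
proof -
  show "0 < r" using assms by (cases "r = 0") simp_all
  then have "0 < r^3 + r\<^sup>2" by (intro add_pos_pos) simp_all
  with assms show "r < 1/3" by linarith
  have unique: "y = r" if "0 < y" "y < 1" "(1 + y\<^sup>2)\<^sup>2 = 4*y" for y :: real
  proof -
    from that tc_equation_factor [of y] have "(y - 1) * (y^3 + y\<^sup>2 + 3*y - 1) = 0" by linarith
    with \<open>y < 1\<close> have "y^3 + y\<^sup>2 + 3*y - 1 = 0" by simp
    moreover have "y < r \<or> r < y" if "y \<noteq> r" using that by linarith
    ultimately show "y = r"
      using assms \<open>0 < y\<close> tc_cubic_strict_mono [of y r] tc_cubic_strict_mono [of r y] by fastforce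
  qed
  have "(1 + r\<^sup>2)\<^sup>2 = 4*r" using tc_equation_factor [of r] assms by (simp only: mult_zero_right)
  with \<open>0 < r\<close> \<open>r < 1/3\<close> have "0 < r \<and> r < 1 \<and> (1 + r\<^sup>2)\<^sup>2 = 4*r" by simp
  then show "tc = r" unfolding tc_def using unique by (intro the_equality) blast+
qed

lemma tc_bounds: "0 < tc" "tc < 1/3"
  and decay_rate_tc: "decay_rate tc = 1"
  and decay_rate_below_tc: "0 \<le> t \<Longrightarrow> t < tc \<Longrightarrow> decay_rate t < 1"
proof -
  have "\<exists>x\<ge>0. x \<le> 1 \<and> x^3 + x\<^sup>2 + 3*x - 1 = (0::real)"
    by (rule IVT') (auto intro!: continuous_intros)
  then obtain r :: real where r: "0 \<le> r" "r \<le> 1" "r^3 + r\<^sup>2 + 3*r - 1 = 0" by blast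
  note root = tc_eq_cubic_root [OF r(1,3)]
  show "0 < tc" "tc < 1/3" using root by simp_all
  have q_pos: "0 < (1 + t\<^sup>2)\<^sup>2" for t :: real
    using add_pos_nonneg [of 1 "t\<^sup>2"] by simp
  have "(1 + tc\<^sup>2)\<^sup>2 = 4*tc" using tc_equation_factor [of tc] root r by simp
  then show "decay_rate tc = 1" using root r by (simp add: decay_rate_def)
  assume "0 \<le> t" "t < tc"
  then have "t^3 + t\<^sup>2 + 3*t - 1 < 0" "t - 1 < 0"
    using tc_cubic_strict_mono [of t r] root r by simp_all
  then have "0 < (t - 1) * (t^3 + t\<^sup>2 + 3*t - 1)" by (simp add: mult_neg_neg)
  then have "4*t < (1 + t\<^sup>2)\<^sup>2" using tc_equation_factor [of t] by linarith
  then show "decay_rate t < 1" using q_pos [of t] by (simp add: decay_rate_def)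
qed

lemma
  fixes z :: complex and t :: real
  assumes z: "cmod z = 1" and t: "0 \<le> t" "t < 1"
  shows norm_fst_Rmap: "cmod (fst (Rmap (z, t))) = 1"
    and snd_Rmap_nonneg: "0 \<le> snd (Rmap (z, t))"
    and snd_Rmap_le: "snd (Rmap (z, t)) \<le> t * decay_rate t"
    and snd_Rmap_less: "z \<noteq> 1 \<Longrightarrow> z \<noteq> -1 \<Longrightarrow> 0 < t \<Longrightarrow> snd (Rmap (z, t)) < t * decay_rate t"
proof -
  define w where "w = z\<^sup>2"
  have w: "cmod w = 1" using z by (simp add: w_def norm_power)
  then have inv: "inverse w = cnj w"
    by (simp add: inverse_eq_divide complex_div_cnj [of 1 w])
  have a: "-1 \<le> Re w" "Re w \<le> 1" using abs_Re_le_cmod [of w] w by auto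
  have "snd (Rmap (z, t)) = t\<^sup>2 * Re (w + inverse w + 2) / (t\<^sup>2 * Re (w + inverse w) + t^4 + 1)"
    by (simp add: Rmap_def w_def)
  then have snd_eq: "snd (Rmap (z, t)) = t\<^sup>2 * (2 * Re w + 2) / (2 * Re w * t\<^sup>2 + t^4 + 1)"
    unfolding inv by (simp add: algebra_simps)
  show "0 \<le> snd (Rmap (z, t))" "snd (Rmap (z, t)) \<le> t * decay_rate t"
    unfolding snd_eq using height_formula_bounds(1,2) [OF t a] by simp_all
  have "w + of_real (t\<^sup>2) \<noteq> 0"
  proof
    assume "w + of_real (t\<^sup>2) = 0"
    then have "w = - of_real (t\<^sup>2)" by (simp add: eq_neg_iff_add_eq_0)
    with w have "t\<^sup>2 = 1" by (simp add: norm_power)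
    with t show False by (simp add: power2_eq_1_iff)
  qed
  have "fst (Rmap (z, t)) = (w + of_real (t\<^sup>2)) / (inverse w + of_real (t\<^sup>2))"
    by (simp add: Rmap_def w_def)
  also have "\<dots> = (w + of_real (t\<^sup>2)) / cnj (w + of_real (t\<^sup>2))"
    unfolding inv by simp
  finally show "cmod (fst (Rmap (z, t))) = 1"
    using \<open>w + of_real (t\<^sup>2) \<noteq> 0\<close> by (simp only: norm_divide complex_mod_cnj) simp
  assume off_line: "z \<noteq> 1" "z \<noteq> -1" and "0 < t"
  have "w \<noteq> 1"
  proof
    assume "w = 1"
    then have "(z - 1) * (z + 1) = 0" by (simp add: w_def power2_eq_square algebra_simps)
    with off_line show False by (simp add: add_eq_0_iff2)
  qed
  have "Re w < 1"
  proof (rule ccontr)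
    assume "\<not> Re w < 1"
    with a have "Re w = 1" by simp
    with w have "Im w = 0" unfolding cmod_def by (simp add: power2_eq_square)
    with \<open>Re w = 1\<close> \<open>w \<noteq> 1\<close> show False by (simp add: complex_eq_iff)
  qed
  then show "snd (Rmap (z, t)) < t * decay_rate t"
    unfolding snd_eq using \<open>0 < t\<close> by (intro height_formula_bounds(3) [OF t a])
qed

lemma power_mult_le_self:
  fixes q t :: "'a::linordered_idom"
  assumes "0 \<le> q" "q \<le> 1" "0 \<le> t"
  shows "q^n * t \<le> t"
  using assms by (simp add: mult_left_le_one_le power_le_one)

lemma orbit_decays_below_tc:
  assumes z: "cmod z = 1" and t: "0 \<le> t" "t < tc"
  shows "(Rmap ^^ n) (z, t) \<in> cyl \<and> snd ((Rmap ^^ n) (z, t)) \<le> decay_rate t ^ n * t"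
proof (induction n)
  case 0
  with z t tc_bounds show ?case by (simp add: cyl_def)
next
  case (Suc n)
  define q where "q = decay_rate t"
  have q: "0 \<le> q" "q < 1" using t decay_rate_below_tc [OF t] by (simp_all add: q_def decay_rate_def)
  obtain z' t' where orbit: "(Rmap ^^ n) (z, t) = (z', t')" by fastforce
  with Suc have z': "cmod z' = 1" and t': "0 \<le> t'" "t' \<le> q^n * t"
    by (auto simp: cyl_def q_def)
  have "q^n * t \<le> t" using q t by (intro power_mult_le_self) simp_all
  with t' t tc_bounds have t'_le: "t' \<le> t" "t' < 1" by linarith+
  have "snd (Rmap (z', t')) \<le> t' * decay_rate t'" by (rule snd_Rmap_le [OF z' t'(1) t'_le(2)])
  also have "\<dots> \<le> t' * q"
    unfolding q_def using decay_rate_mono [OF t'(1) t'_le(1)] t tc_bounds t'(1)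
    by (intro mult_left_mono) auto
  also have "\<dots> \<le> q^n * t * q" using t' q by (simp add: mult_right_mono)
  finally have step: "snd (Rmap (z', t')) \<le> q^Suc n * t" by (simp add: algebra_simps)
  have "q^Suc n * t \<le> t" using q t by (intro power_mult_le_self) simp_all
  with step t tc_bounds have "snd (Rmap (z', t')) \<le> 1" by linarith
  then have "Rmap (z', t') \<in> cyl"
    using norm_fst_Rmap [OF z' t'(1) t'_le(2)] snd_Rmap_nonneg [OF z' t'(1) t'_le(2)]
    by (cases "Rmap (z', t')") (auto simp: cyl_def)
  with step orbit show ?case by (simp add: q_def)
qed

lemma below_tc_in_Ws_B:
  assumes z: "cmod z = 1" and t: "0 \<le> t" "t < tc"
  shows "(z, t) \<in> Ws_B"
proof -
  note orbit = orbit_decays_below_tc [OF z t]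
  define q where "q = decay_rate t"
  have q: "0 \<le> q" "q < 1" using t decay_rate_below_tc [OF t] by (simp_all add: q_def decay_rate_def)
  have nonneg: "0 \<le> snd ((Rmap ^^ n) (z, t))" for n
    using orbit [of n] by (cases "(Rmap ^^ n) (z, t)") (simp add: cyl_def)
  have not_indet: "(Rmap ^^ n) (z, t) \<notin> indet" for n
  proof -
    have "q^n * t \<le> t" using q t by (intro power_mult_le_self) simp_all
    with orbit [of n] t tc_bounds have "snd ((Rmap ^^ n) (z, t)) < 1" by (simp add: q_def)
    then show ?thesis by (cases "(Rmap ^^ n) (z, t)") (simp add: indet_def)
  qed
  have geometric: "(\<lambda>n. q^n * t) \<longlonglongrightarrow> 0"
    using LIMSEQ_power_zero [of q] q by (intro tendsto_mult_left_zero) simp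
  have "(\<lambda>n. snd ((Rmap ^^ n) (z, t))) \<longlonglongrightarrow> 0"
  proof (rule tendsto_sandwich [OF _ _ tendsto_const geometric])
    show "\<forall>\<^sub>F n in sequentially. 0 \<le> snd ((Rmap ^^ n) (z, t))" using nonneg by simp
    show "\<forall>\<^sub>F n in sequentially. snd ((Rmap ^^ n) (z, t)) \<le> q^n * t" using orbit by (simp add: q_def)
  qed
  with orbit [of 0] not_indet show ?thesis unfolding Ws_B_def by simp
qed

lemma Ws_B_preimage:
  assumes "x \<in> cyl" "x \<notin> indet" "Rmap x \<in> Ws_B"
  shows "x \<in> Ws_B"
proof -
  have shift: "(Rmap ^^ Suc n) x = (Rmap ^^ n) (Rmap x)" for n
    by (simp only: funpow_Suc_right comp_apply)
  have "(Rmap ^^ n) x \<notin> indet" for n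
    using assms shift by (cases n) (auto simp: Ws_B_def)
  moreover have "(\<lambda>n. snd ((Rmap ^^ Suc n) x)) \<longlonglongrightarrow> 0"
    unfolding shift using assms(3) by (simp add: Ws_B_def)
  then have "(\<lambda>n. snd ((Rmap ^^ n) x)) \<longlonglongrightarrow> 0" by (rule LIMSEQ_imp_Suc)
  ultimately show ?thesis using assms(1) by (simp add: Ws_B_def)
qed

theorem lemma9p1:
  shows "{(cis phi, t) | phi t. 0 \<le> t \<and> t \<le> tc} - {(cis 0, tc), (cis pi, tc)} \<subseteq> Ws_B"
proof
  fix x assume "x \<in> {(cis phi, t) | phi t. 0 \<le> t \<and> t \<le> tc} - {(cis 0, tc), (cis pi, tc)}"
  then obtain phi t where x: "x = (cis phi, t)" "0 \<le> t" "t \<le> tc"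
    and not_fixed: "x \<noteq> (1, tc)" "x \<noteq> (-1, tc)"
    by auto
  have z: "cmod (cis phi) = 1" by simp
  show "x \<in> Ws_B"
  proof (cases "t < tc")
    case True
    with below_tc_in_Ws_B [OF z x(2)] x show ?thesis by simp
  next
    case False
    with x have t: "t = tc" "0 \<le> t" "t < 1" using tc_bounds by auto
    obtain z' t' where image: "Rmap (cis phi, t) = (z', t')" by fastforce
    have "t' < tc"
      using snd_Rmap_less [OF z t(2,3)] not_fixed x t tc_bounds decay_rate_tc image by auto
    then have "Rmap (cis phi, t) \<in> Ws_B"
      using norm_fst_Rmap [OF z t(2,3)] snd_Rmap_nonneg [OF z t(2,3)] image below_tc_in_Ws_B
      by simp
    moreover have "x \<in> cyl" "x \<notin> indet" using x t by (auto simp: cyl_def indet_def)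
    ultimately show ?thesis using Ws_B_preimage x by simp
  qed
qed

end
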